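(* Every morphism of bigroupoids $(F,\phi):\mathcal A\to\mathcal C$ factors as $(F,\phi)=(H,\eta)\circ(G,\gamma)$ with $(G,\gamma):\mathcal A\to\mathcal B$ a cofibration and $(H,\eta):\mathcal B\to\mathcal C$ a strict morphism (i.e. $\eta$ is the identity) which is a trivial fibration.
   Context: A bigroupoid $\mathcal B$ consists of: a set $\mathcal B_0$ of 0-cells; for each $A,B\in\mathcal B_0$ a groupoid $\mathcal B(A,B)$ whose objects are 1-cells and whose arrows are 2-cells; composition functors $*$; identity 1-cells $1_A$; inversion functors $(-)^*:\mathcal B(A,B)\to\mathcal B(B,A)$; and natural isomorphisms $\mathbf a:(h*g)*f\Rightarrow h*(g*f)$, $\mathbf l:1_B*f\Rightarrow f$, $\mathbf r:f*1_A\Rightarrow f$, $\mathbf e:f^**f\Rightarrow 1_A$, $\mathbf i:1_B\Rightarrow f*f^*$, such that the pentagon for $\mathbf a$ commutes, $(\mathrm{id}*\mathbf l)\circ\mathbf a=\mathbf r*\mathrm{id}$, and $\mathbf r_f\circ(\mathrm{id}*\mathbf e_f)\circ\mathbf a\circ(\mathbf i_f*\mathrm{id})=\mathbf l_f$. A morphism $(F,\phi):\mathcal A\to\mathcal B$ consists of a function on 0-cells, functors $F_{A,A'}:\mathcal A(A,A')\to\mathcal B(FA,FA')$ and natural isomorphisms $\phi_{g,f}:Fg*Ff\Rightarrow F(g*f)$, $\phi_A:1_{FA}\Rightarrow F1_A$, $\phi_f:(Ff)^*\Rightarrow F(f^* )$ satisfying $F\mathbf a\circ\phi\circ(\phi*\mathrm{id})=\phi\circ(\mathrm{id}*\phi)\circ\mathbf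 a$, $F\mathbf r\circ\phi\circ(\mathrm{id}*\phi_A)=\mathbf r$, $F\mathbf l\circ\phi\circ(\phi_B*\mathrm{id})=\mathbf l$, $F\mathbf e\circ\phi\circ(\phi_f*\mathrm{id})=\phi_A\circ\mathbf e$, $F\mathbf i\circ\phi_B=\phi\circ(\mathrm{id}*\phi_f)\circ\mathbf i$; it is strict if all components of $\phi$ are identities; composition is $(G,\gamma)\circ(F,\phi)=(GF,G\phi\circ\gamma F)$. Fibration: (1) for every 0-cell $A'$ of $\mathcal A$ and 1-cell $b:B\to FA'$ there is $a:A\to A'$ with $FA=B$, $Fa=b$; (2) for every 1-cell $a'$ and 2-cell $\beta:b\Rightarrow Fa'$ there is $\alpha:a\Rightarrow a'$ with $Fa=b$, $F\alpha=\beta$. Cofibration: injective on 0-cells and each $F_{A,A'}$ injective on objects. Weak equivalence: every 0-cell $B$ of $\mathcal B$ admits a 1-cell $B\to FA'$ for some 0-cell $A'$, and each $F_{A,A'}$ is an equivalence of categories. A trivial fibration is a fibration that is a weak equivalence. *)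

theory Defs
  imports Main
begin

text \<open>A bigroupoid is encoded by its sets of 0-cells, 1-cells and 2-cells together with
source/target maps (so that the hom-groupoids B(X,Y) are disjoint) and total operation
functions, whose values only matter on composable arguments.\<close>

record ('o,'m,'t) bigrpd =
  obj :: "'o set"
  ar1 :: "'m set"
  ar2 :: "'t set"
  s1 :: "'m \<Rightarrow> 'o"
  t1 :: "'m \<Rightarrow> 'o"
  s2 :: "'t \<Rightarrow> 'm"
  t2 :: "'t \<Rightarrow> 'm"
  vc :: "'t \<Rightarrow> 't \<Rightarrow> 't"
  vi :: "'m \<Rightarrow> 't"
  hc1 :: "'m \<Rightarrow> 'm \<Rightarrow> 'm"
  hc2 :: "'t \<Rightarrow> 't \<Rightarrow> 't"
  idc :: "'o \<Rightarrow> 'm"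
  inv1 :: "'m \<Rightarrow> 'm"
  inv2 :: "'t \<Rightarrow> 't"
  assoc :: "'m \<Rightarrow> 'm \<Rightarrow> 'm \<Rightarrow> 't"
  lunit :: "'m \<Rightarrow> 't"
  runit :: "'m \<Rightarrow> 't"
  evc :: "'m \<Rightarrow> 't"
  coevc :: "'m \<Rightarrow> 't"

definition hom :: "('o,'m,'t) bigrpd \<Rightarrow> 'o \<Rightarrow> 'o \<Rightarrow> 'm set" where
  "hom B X Y = {f \<in> ar1 B. s1 B f = X \<and> t1 B f = Y}"

definition cell :: "('o,'m,'t) bigrpd \<Rightarrow> 'm \<Rightarrow> 'm \<Rightarrow> 't set" where
  "cell B f g = {\<alpha> \<in> ar2 B. s2 B \<alpha> = f \<and> t2 B \<alpha> = g}"

definition bigroupoid :: "('o,'m,'t) bigrpd \<Rightarrow> bool" where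
  "bigroupoid B \<longleftrightarrow>
    \<comment> \<open>typing of cells\<close>
    (\<forall>f\<in>ar1 B. s1 B f \<in> obj B \<and> t1 B f \<in> obj B) \<and>
    (\<forall>\<alpha>\<in>ar2 B. s2 B \<alpha> \<in> ar1 B \<and> t2 B \<alpha> \<in> ar1 B \<and>
        s1 B (s2 B \<alpha>) = s1 B (t2 B \<alpha>) \<and> t1 B (s2 B \<alpha>) = t1 B (t2 B \<alpha>)) \<and>
    \<comment> \<open>each B(X,Y) is a groupoid\<close>
    (\<forall>f\<in>ar1 B. vi B f \<in> cell B f f) \<and>
    (\<forall>\<alpha>\<in>ar2 B. \<forall>\<beta>\<in>ar2 B. t2 B \<alpha> = s2 B \<beta> \<longrightarrow>
        vc B \<beta> \<alpha> \<in> cell B (s2 B \<alpha>) (t2 B \<beta>)) \<and>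
    (\<forall>\<alpha>\<in>ar2 B. \<forall>\<beta>\<in>ar2 B. \<forall>\<gamma>\<in>ar2 B. t2 B \<alpha> = s2 B \<beta> \<longrightarrow> t2 B \<beta> = s2 B \<gamma> \<longrightarrow>
        vc B \<gamma> (vc B \<beta> \<alpha>) = vc B (vc B \<gamma> \<beta>) \<alpha>) \<and>
    (\<forall>\<alpha>\<in>ar2 B. vc B (vi B (t2 B \<alpha>)) \<alpha> = \<alpha> \<and> vc B \<alpha> (vi B (s2 B \<alpha>)) = \<alpha>) \<and>
    (\<forall>\<alpha>\<in>ar2 B. \<exists>\<beta>\<in>cell B (t2 B \<alpha>) (s2 B \<alpha>).
        vc B \<beta> \<alpha> = vi B (s2 B \<alpha>) \<and> vc B \<alpha> \<beta> = vi B (t2 B \<alpha>)) \<and>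
    \<comment> \<open>composition functors\<close>
    (\<forall>f\<in>ar1 B. \<forall>g\<in>ar1 B. t1 B f = s1 B g \<longrightarrow> hc1 B g f \<in> hom B (s1 B f) (t1 B g)) \<and>
    (\<forall>\<alpha>\<in>ar2 B. \<forall>\<beta>\<in>ar2 B. t1 B (s2 B \<alpha>) = s1 B (s2 B \<beta>) \<longrightarrow>
        hc2 B \<beta> \<alpha> \<in> cell B (hc1 B (s2 B \<beta>) (s2 B \<alpha>)) (hc1 B (t2 B \<beta>) (t2 B \<alpha>))) \<and>
    (\<forall>f\<in>ar1 B. \<forall>g\<in>ar1 B. t1 B f = s1 B g \<longrightarrow> hc2 B (vi B g) (vi B f) = vi B (hc1 B g f)) \<and>
    (\<forall>\<alpha>\<in>ar2 B. \<forall>\<alpha>'\<in>ar2 B. \<forall>\<beta>\<in>ar2 B. \<forall>\<beta>'\<in>ar2 B.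
        t2 B \<alpha> = s2 B \<alpha>' \<longrightarrow> t2 B \<beta> = s2 B \<beta>' \<longrightarrow> t1 B (s2 B \<alpha>) = s1 B (s2 B \<beta>) \<longrightarrow>
        hc2 B (vc B \<beta>' \<beta>) (vc B \<alpha>' \<alpha>) = vc B (hc2 B \<beta>' \<alpha>') (hc2 B \<beta> \<alpha>)) \<and>
    \<comment> \<open>identity 1-cells\<close>
    (\<forall>X\<in>obj B. idc B X \<in> hom B X X) \<and>
    \<comment> \<open>inversion functors B(X,Y) -> B(Y,X)\<close>
    (\<forall>f\<in>ar1 B. inv1 B f \<in> hom B (t1 B f) (s1 B f)) \<and>
    (\<forall>\<alpha>\<in>ar2 B. inv2 B \<alpha> \<in> cell B (inv1 B (s2 B \<alpha>)) (inv1 B (t2 B \<alpha>))) \<and>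
    (\<forall>f\<in>ar1 B. inv2 B (vi B f) = vi B (inv1 B f)) \<and>
    (\<forall>\<alpha>\<in>ar2 B. \<forall>\<beta>\<in>ar2 B. t2 B \<alpha> = s2 B \<beta> \<longrightarrow>
        inv2 B (vc B \<beta> \<alpha>) = vc B (inv2 B \<beta>) (inv2 B \<alpha>)) \<and>
    \<comment> \<open>associator a and its naturality\<close>
    (\<forall>f\<in>ar1 B. \<forall>g\<in>ar1 B. \<forall>h\<in>ar1 B. t1 B f = s1 B g \<longrightarrow> t1 B g = s1 B h \<longrightarrow>
        assoc B h g f \<in> cell B (hc1 B (hc1 B h g) f) (hc1 B h (hc1 B g f))) \<and>
    (\<forall>\<alpha>\<in>ar2 B. \<forall>\<beta>\<in>ar2 B. \<forall>\<gamma>\<in>ar2 B.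
        t1 B (s2 B \<alpha>) = s1 B (s2 B \<beta>) \<longrightarrow> t1 B (s2 B \<beta>) = s1 B (s2 B \<gamma>) \<longrightarrow>
        vc B (assoc B (t2 B \<gamma>) (t2 B \<beta>) (t2 B \<alpha>)) (hc2 B (hc2 B \<gamma> \<beta>) \<alpha>)
          = vc B (hc2 B \<gamma> (hc2 B \<beta> \<alpha>)) (assoc B (s2 B \<gamma>) (s2 B \<beta>) (s2 B \<alpha>))) \<and>
    \<comment> \<open>left unitor l\<close>
    (\<forall>f\<in>ar1 B. lunit B f \<in> cell B (hc1 B (idc B (t1 B f)) f) f) \<and>
    (\<forall>\<alpha>\<in>ar2 B. vc B \<alpha> (lunit B (s2 B \<alpha>))
        = vc B (lunit B (t2 B \<alpha>)) (hc2 B (vi B (idc B (t1 B (s2 B \<alpha>)))) \<alpha>)) \<and>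
    \<comment> \<open>right unitor r\<close>
    (\<forall>f\<in>ar1 B. runit B f \<in> cell B (hc1 B f (idc B (s1 B f))) f) \<and>
    (\<forall>\<alpha>\<in>ar2 B. vc B \<alpha> (runit B (s2 B \<alpha>))
        = vc B (runit B (t2 B \<alpha>)) (hc2 B \<alpha> (vi B (idc B (s1 B (s2 B \<alpha>)))))) \<and>
    \<comment> \<open>e : f^* * f => 1_A\<close>
    (\<forall>f\<in>ar1 B. evc B f \<in> cell B (hc1 B (inv1 B f) f) (idc B (s1 B f))) \<and>
    (\<forall>\<alpha>\<in>ar2 B. vc B (vi B (idc B (s1 B (s2 B \<alpha>)))) (evc B (s2 B \<alpha>))
        = vc B (evc B (t2 B \<alpha>)) (hc2 B (inv2 B \<alpha>) \<alpha>)) \<and>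
    \<comment> \<open>i : 1_B => f * f^*\<close>
    (\<forall>f\<in>ar1 B. coevc B f \<in> cell B (idc B (t1 B f)) (hc1 B f (inv1 B f))) \<and>
    (\<forall>\<alpha>\<in>ar2 B. vc B (hc2 B \<alpha> (inv2 B \<alpha>)) (coevc B (s2 B \<alpha>))
        = vc B (coevc B (t2 B \<alpha>)) (vi B (idc B (t1 B (s2 B \<alpha>))))) \<and>
    \<comment> \<open>pentagon\<close>
    (\<forall>f\<in>ar1 B. \<forall>g\<in>ar1 B. \<forall>h\<in>ar1 B. \<forall>k\<in>ar1 B.
        t1 B f = s1 B g \<longrightarrow> t1 B g = s1 B h \<longrightarrow> t1 B h = s1 B k \<longrightarrow>
        vc B (assoc B k h (hc1 B g f)) (assoc B (hc1 B k h) g f)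
          = vc B (hc2 B (vi B k) (assoc B h g f))
              (vc B (assoc B k (hc1 B h g) f) (hc2 B (assoc B k h g) (vi B f)))) \<and>
    \<comment> \<open>(id * l) o a = r * id\<close>
    (\<forall>f\<in>ar1 B. \<forall>g\<in>ar1 B. t1 B f = s1 B g \<longrightarrow>
        vc B (hc2 B (vi B g) (lunit B f)) (assoc B g (idc B (t1 B f)) f)
          = hc2 B (runit B g) (vi B f)) \<and>
    \<comment> \<open>r o (id * e) o a o (i * id) = l\<close>
    (\<forall>f\<in>ar1 B.
        vc B (runit B f) (vc B (hc2 B (vi B f) (evc B f))
          (vc B (assoc B f (inv1 B f) f) (hc2 B (coevc B f) (vi B f))))
          = lunit B f)"

record ('ao,'am,'at,'bo,'bm,'bt) bmor =
  F0 :: "'ao \<Rightarrow> 'bo"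
  F1 :: "'am \<Rightarrow> 'bm"
  F2 :: "'at \<Rightarrow> 'bt"
  phc :: "'am \<Rightarrow> 'am \<Rightarrow> 'bt"
  phu :: "'ao \<Rightarrow> 'bt"
  phi :: "'am \<Rightarrow> 'bt"

definition morphism ::
  "('ao,'am,'at) bigrpd \<Rightarrow> ('bo,'bm,'bt) bigrpd \<Rightarrow> ('ao,'am,'at,'bo,'bm,'bt) bmor \<Rightarrow> bool" where
  "morphism A B M \<longleftrightarrow>
    (\<forall>X\<in>obj A. F0 M X \<in> obj B) \<and>
    (\<forall>f\<in>ar1 A. F1 M f \<in> hom B (F0 M (s1 A f)) (F0 M (t1 A f))) \<and>
    (\<forall>\<alpha>\<in>ar2 A. F2 M \<alpha> \<in> cell B (F1 M (s2 A \<alpha>)) (F1 M (t2 A \<alpha>))) \<and>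
    (\<forall>f\<in>ar1 A. F2 M (vi A f) = vi B (F1 M f)) \<and>
    (\<forall>\<alpha>\<in>ar2 A. \<forall>\<beta>\<in>ar2 A. t2 A \<alpha> = s2 A \<beta> \<longrightarrow>
        F2 M (vc A \<beta> \<alpha>) = vc B (F2 M \<beta>) (F2 M \<alpha>)) \<and>
    \<comment> \<open>phi_{g,f} and naturality\<close>
    (\<forall>f\<in>ar1 A. \<forall>g\<in>ar1 A. t1 A f = s1 A g \<longrightarrow>
        phc M g f \<in> cell B (hc1 B (F1 M g) (F1 M f)) (F1 M (hc1 A g f))) \<and>
    (\<forall>\<alpha>\<in>ar2 A. \<forall>\<beta>\<in>ar2 A. t1 A (s2 A \<alpha>) = s1 A (s2 A \<beta>) \<longrightarrow>
        vc B (F2 M (hc2 A \<beta> \<alpha>)) (phc M (s2 A \<beta>) (s2 A \<alpha>))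
          = vc B (phc M (t2 A \<beta>) (t2 A \<alpha>)) (hc2 B (F2 M \<beta>) (F2 M \<alpha>))) \<and>
    \<comment> \<open>phi_A\<close>
    (\<forall>X\<in>obj A. phu M X \<in> cell B (idc B (F0 M X)) (F1 M (idc A X))) \<and>
    \<comment> \<open>phi_f and naturality\<close>
    (\<forall>f\<in>ar1 A. phi M f \<in> cell B (inv1 B (F1 M f)) (F1 M (inv1 A f))) \<and>
    (\<forall>\<alpha>\<in>ar2 A. vc B (F2 M (inv2 A \<alpha>)) (phi M (s2 A \<alpha>))
        = vc B (phi M (t2 A \<alpha>)) (inv2 B (F2 M \<alpha>))) \<and>
    \<comment> \<open>F a o phi o (phi * id) = phi o (id * phi) o a\<close>
    (\<forall>f\<in>ar1 A. \<forall>g\<in>ar1 A. \<forall>h\<in>ar1 A. t1 A f = s1 A g \<longrightarrow> t1 A g = s1 A h \<longrightarrow>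
        vc B (F2 M (assoc A h g f))
          (vc B (phc M (hc1 A h g) f) (hc2 B (phc M h g) (vi B (F1 M f))))
        = vc B (phc M h (hc1 A g f))
          (vc B (hc2 B (vi B (F1 M h)) (phc M g f)) (assoc B (F1 M h) (F1 M g) (F1 M f)))) \<and>
    \<comment> \<open>F r o phi o (id * phi_A) = r\<close>
    (\<forall>f\<in>ar1 A.
        vc B (F2 M (runit A f))
          (vc B (phc M f (idc A (s1 A f))) (hc2 B (vi B (F1 M f)) (phu M (s1 A f))))
        = runit B (F1 M f)) \<and>
    \<comment> \<open>F l o phi o (phi_B * id) = l\<close>
    (\<forall>f\<in>ar1 A.
        vc B (F2 M (lunit A f))
          (vc B (phc M (idc A (t1 A f)) f) (hc2 B (phu M (t1 A f)) (vi B (F1 M f))))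
        = lunit B (F1 M f)) \<and>
    \<comment> \<open>F e o phi o (phi_f * id) = phi_A o e\<close>
    (\<forall>f\<in>ar1 A.
        vc B (F2 M (evc A f))
          (vc B (phc M (inv1 A f) f) (hc2 B (phi M f) (vi B (F1 M f))))
        = vc B (phu M (s1 A f)) (evc B (F1 M f))) \<and>
    \<comment> \<open>F i o phi_B = phi o (id * phi_f) o i\<close>
    (\<forall>f\<in>ar1 A.
        vc B (F2 M (coevc A f)) (phu M (t1 A f))
        = vc B (phc M f (inv1 A f))
            (vc B (hc2 B (vi B (F1 M f)) (phi M f)) (coevc B (F1 M f))))"

definition strict_mor ::
  "('ao,'am,'at) bigrpd \<Rightarrow> ('bo,'bm,'bt) bigrpd \<Rightarrow> ('ao,'am,'at,'bo,'bm,'bt) bmor \<Rightarrow> bool" where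
  "strict_mor A B M \<longleftrightarrow>
    (\<forall>f\<in>ar1 A. \<forall>g\<in>ar1 A. t1 A f = s1 A g \<longrightarrow> phc M g f = vi B (hc1 B (F1 M g) (F1 M f))) \<and>
    (\<forall>X\<in>obj A. phu M X = vi B (idc B (F0 M X))) \<and>
    (\<forall>f\<in>ar1 A. phi M f = vi B (inv1 B (F1 M f)))"

definition mcomp ::
  "('co,'cm,'ct) bigrpd \<Rightarrow> ('bo,'bm,'bt,'co,'cm,'ct) bmor \<Rightarrow> ('ao,'am,'at,'bo,'bm,'bt) bmor
     \<Rightarrow> ('ao,'am,'at,'co,'cm,'ct) bmor" where
  "mcomp C N M =
    \<lparr> F0 = F0 N \<circ> F0 M, F1 = F1 N \<circ> F1 M, F2 = F2 N \<circ> F2 M,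
      phc = (\<lambda>g f. vc C (F2 N (phc M g f)) (phc N (F1 M g) (F1 M f))),
      phu = (\<lambda>X. vc C (F2 N (phu M X)) (phu N (F0 M X))),
      phi = (\<lambda>f. vc C (F2 N (phi M f)) (phi N (F1 M f))) \<rparr>"

text \<open>Equality of morphisms out of A: all data agree on the cells of A
 (values of the total HOL functions outside the carriers are irrelevant).\<close>
definition mor_eq ::
  "('ao,'am,'at) bigrpd \<Rightarrow> ('ao,'am,'at,'bo,'bm,'bt) bmor \<Rightarrow> ('ao,'am,'at,'bo,'bm,'bt) bmor \<Rightarrow> bool" where
  "mor_eq A M N \<longleftrightarrow>
    (\<forall>X\<in>obj A. F0 M X = F0 N X) \<and>
    (\<forall>f\<in>ar1 A. F1 M f = F1 N f) \<and>
    (\<forall>\<alpha>\<in>ar2 A. F2 M \<alpha> = F2 N \<alpha>) \<and>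
    (\<forall>f\<in>ar1 A. \<forall>g\<in>ar1 A. t1 A f = s1 A g \<longrightarrow> phc M g f = phc N g f) \<and>
    (\<forall>X\<in>obj A. phu M X = phu N X) \<and>
    (\<forall>f\<in>ar1 A. phi M f = phi N f)"

definition fibration ::
  "('ao,'am,'at) bigrpd \<Rightarrow> ('bo,'bm,'bt) bigrpd \<Rightarrow> ('ao,'am,'at,'bo,'bm,'bt) bmor \<Rightarrow> bool" where
  "fibration A B M \<longleftrightarrow>
    (\<forall>X'\<in>obj A. \<forall>b\<in>ar1 B. t1 B b = F0 M X' \<longrightarrow>
        (\<exists>a\<in>ar1 A. t1 A a = X' \<and> F0 M (s1 A a) = s1 B b \<and> F1 M a = b)) \<and>
    (\<forall>a'\<in>ar1 A. \<forall>\<beta>\<in>ar2 B. t2 B \<beta> = F1 M a' \<longrightarrow>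
        (\<exists>\<alpha>\<in>ar2 A. t2 A \<alpha> = a' \<and> F1 M (s2 A \<alpha>) = s2 B \<beta> \<and> F2 M \<alpha> = \<beta>))"

definition cofibration ::
  "('ao,'am,'at) bigrpd \<Rightarrow> ('bo,'bm,'bt) bigrpd \<Rightarrow> ('ao,'am,'at,'bo,'bm,'bt) bmor \<Rightarrow> bool" where
  "cofibration A B M \<longleftrightarrow>
    inj_on (F0 M) (obj A) \<and>
    (\<forall>X\<in>obj A. \<forall>Y\<in>obj A. inj_on (F1 M) (hom A X Y))"

text \<open>The functor F_{X,Y} : A(X,Y) -> B(FX,FY) is an equivalence of categories:
 there is a functor K back and natural isomorphisms 1 => KF and FK => 1
 (naturality given; invertibility is automatic in groupoids).\<close>
definition hom_equivalence ::
  "('ao,'am,'at) bigrpd \<Rightarrow> ('bo,'bm,'bt) bigrpd \<Rightarrow> ('ao,'am,'at,'bo,'bm,'bt) bmor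
     \<Rightarrow> 'ao \<Rightarrow> 'ao \<Rightarrow> bool" where
  "hom_equivalence A B M X Y \<longleftrightarrow>
    (\<exists>(K1 :: 'bm \<Rightarrow> 'am) (K2 :: 'bt \<Rightarrow> 'at) (\<eta> :: 'am \<Rightarrow> 'at) (\<epsilon> :: 'bm \<Rightarrow> 'bt).
      (\<forall>h\<in>hom B (F0 M X) (F0 M Y). K1 h \<in> hom A X Y) \<and>
      (\<forall>\<beta>\<in>ar2 B. s2 B \<beta> \<in> hom B (F0 M X) (F0 M Y) \<longrightarrow>
          K2 \<beta> \<in> cell A (K1 (s2 B \<beta>)) (K1 (t2 B \<beta>))) \<and>
      (\<forall>h\<in>hom B (F0 M X) (F0 M Y). K2 (vi B h) = vi A (K1 h)) \<and>
      (\<forall>\<beta>\<in>ar2 B. \<forall>\<beta>'\<in>ar2 B. s2 B \<beta> \<in> hom B (F0 M X) (F0 M Y) \<longrightarrow> t2 B \<beta> = s2 B \<beta>' \<longrightarrow>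
          K2 (vc B \<beta>' \<beta>) = vc A (K2 \<beta>') (K2 \<beta>)) \<and>
      (\<forall>f\<in>hom A X Y. \<eta> f \<in> cell A f (K1 (F1 M f))) \<and>
      (\<forall>\<alpha>\<in>ar2 A. s2 A \<alpha> \<in> hom A X Y \<longrightarrow>
          vc A (K2 (F2 M \<alpha>)) (\<eta> (s2 A \<alpha>)) = vc A (\<eta> (t2 A \<alpha>)) \<alpha>) \<and>
      (\<forall>h\<in>hom B (F0 M X) (F0 M Y). \<epsilon> h \<in> cell B (F1 M (K1 h)) h) \<and>
      (\<forall>\<beta>\<in>ar2 B. s2 B \<beta> \<in> hom B (F0 M X) (F0 M Y) \<longrightarrow>
          vc B \<beta> (\<epsilon> (s2 B \<beta>)) = vc B (\<epsilon> (t2 B \<beta>)) (F2 M (K2 \<beta>))))"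

definition weak_equivalence ::
  "('ao,'am,'at) bigrpd \<Rightarrow> ('bo,'bm,'bt) bigrpd \<Rightarrow> ('ao,'am,'at,'bo,'bm,'bt) bmor \<Rightarrow> bool" where
  "weak_equivalence A B M \<longleftrightarrow>
    (\<forall>Z\<in>obj B. \<exists>X'\<in>obj A. hom B Z (F0 M X') \<noteq> {}) \<and>
    (\<forall>X\<in>obj A. \<forall>Y\<in>obj A. hom_equivalence A B M X Y)"

definition trivial_fibration ::
  "('ao,'am,'at) bigrpd \<Rightarrow> ('bo,'bm,'bt) bigrpd \<Rightarrow> ('ao,'am,'at,'bo,'bm,'bt) bmor \<Rightarrow> bool" where
  "trivial_fibration A B M \<longleftrightarrow> fibration A B M \<and> weak_equivalence A B M"

text \<open>HOL cannot quantify over types, so the middle bigroupoid of the factorization must live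
in a fixed type built from the types of A and C. We use formal words of 1-cells
(generators with specified endpoints, identities, composites, inverses).\<close>

datatype ('o,'g) cterm =
    CGen 'o 'g 'o | CId 'o | CComp "('o,'g) cterm" "('o,'g) cterm" | CInv "('o,'g) cterm"

type_synonym ('ao,'am,'at,'co,'cm,'ct) mid_bigrpd =
  "('ao + 'co, ('ao + 'co, 'am + 'cm) cterm,
     ('ao + 'co, 'am + 'cm) cterm \<times> ('at + 'ct) \<times> ('ao + 'co, 'am + 'cm) cterm) bigrpd"

end

theory Submission
  imports Defs
begin

(*
  Let B have as 0-cells the disjoint union of those of A and of C. Its 1-cells X -> Y are
  the 1-cells of A (when X, Y come from A), together with a fresh generator for every 1-cell
  of C between the images of X and Y; its 2-cells f => g are the 2-cells of C between the
  images of f and g, and all operations and coherence cells of B are computed in C. Then the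
  projection H : B -> C is strict and bijective on 2-cells with given boundary, so B inherits
  every bigroupoid axiom from C. The fresh generators make H surjective on 0-cells and
  (over any boundary) on 1-cells, whence H is a fibration and a weak equivalence. The
  inclusion G : A -> B is injective on 0- and 1-cells and carries the coherence cells of M,
  so that H o G = M.
*)

lemma mem_hom [simp]: "f \<in> hom B X Y \<longleftrightarrow> f \<in> ar1 B \<and> s1 B f = X \<and> t1 B f = Y"
  by (simp add: hom_def)

lemma mem_cell [simp]: "\<alpha> \<in> cell B f g \<longleftrightarrow> \<alpha> \<in> ar2 B \<and> s2 B \<alpha> = f \<and> t2 B \<alpha> = g"
  by (simp add: cell_def)

context
  fixes B :: "('o,'m,'t) bigrpd"
  assumes bg: "bigroupoid B"
begin

lemma
  shows bigroupoid_s1_obj: "f \<in> ar1 B \<Longrightarrow> s1 B f \<in> obj B"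
    and bigroupoid_t1_obj: "f \<in> ar1 B \<Longrightarrow> t1 B f \<in> obj B"
    and bigroupoid_s2_ar1: "\<alpha> \<in> ar2 B \<Longrightarrow> s2 B \<alpha> \<in> ar1 B"
    and bigroupoid_t2_ar1: "\<alpha> \<in> ar2 B \<Longrightarrow> t2 B \<alpha> \<in> ar1 B"
    and bigroupoid_s1_t2: "\<alpha> \<in> ar2 B \<Longrightarrow> s1 B (t2 B \<alpha>) = s1 B (s2 B \<alpha>)"
    and bigroupoid_t1_t2: "\<alpha> \<in> ar2 B \<Longrightarrow> t1 B (t2 B \<alpha>) = t1 B (s2 B \<alpha>)"
    and bigroupoid_vi_cell: "f \<in> ar1 B \<Longrightarrow> vi B f \<in> cell B f f"
    and bigroupoid_vc_cell: "\<alpha> \<in> cell B f g \<Longrightarrow> \<beta> \<in> cell B g h \<Longrightarrow> vc B \<beta> \<alpha> \<in> cell B f h"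
    and bigroupoid_hc1_hom: "f \<in> ar1 B \<Longrightarrow> g \<in> ar1 B \<Longrightarrow> t1 B f = s1 B g \<Longrightarrow>
           hc1 B g f \<in> hom B (s1 B f) (t1 B g)"
    and bigroupoid_hc2_cell: "\<alpha> \<in> cell B f f' \<Longrightarrow> \<beta> \<in> cell B g g' \<Longrightarrow> t1 B f = s1 B g \<Longrightarrow>
           hc2 B \<beta> \<alpha> \<in> cell B (hc1 B g f) (hc1 B g' f')"
    and bigroupoid_idc_hom: "X \<in> obj B \<Longrightarrow> idc B X \<in> hom B X X"
    and bigroupoid_inv1_hom: "f \<in> ar1 B \<Longrightarrow> inv1 B f \<in> hom B (t1 B f) (s1 B f)"
    and bigroupoid_inv2_cell: "\<alpha> \<in> cell B f g \<Longrightarrow> inv2 B \<alpha> \<in> cell B (inv1 B f) (inv1 B g)"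
    and bigroupoid_assoc_cell: "f \<in> ar1 B \<Longrightarrow> g \<in> ar1 B \<Longrightarrow> h \<in> ar1 B \<Longrightarrow>
           t1 B f = s1 B g \<Longrightarrow> t1 B g = s1 B h \<Longrightarrow>
           assoc B h g f \<in> cell B (hc1 B (hc1 B h g) f) (hc1 B h (hc1 B g f))"
    and bigroupoid_lunit_cell: "f \<in> ar1 B \<Longrightarrow> lunit B f \<in> cell B (hc1 B (idc B (t1 B f)) f) f"
    and bigroupoid_runit_cell: "f \<in> ar1 B \<Longrightarrow> runit B f \<in> cell B (hc1 B f (idc B (s1 B f))) f"
    and bigroupoid_evc_cell: "f \<in> ar1 B \<Longrightarrow> evc B f \<in> cell B (hc1 B (inv1 B f) f) (idc B (s1 B f))"
    and bigroupoid_coevc_cell: "f \<in> ar1 B \<Longrightarrow> coevc B f \<in> cell B (idc B (t1 B f)) (hc1 B f (inv1 B f))"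
  using bg unfolding bigroupoid_def by auto

lemmas bigroupoid_typing =
  bigroupoid_s1_obj bigroupoid_t1_obj bigroupoid_s2_ar1 bigroupoid_t2_ar1
  bigroupoid_s1_t2 bigroupoid_t1_t2 bigroupoid_vi_cell bigroupoid_vc_cell
  bigroupoid_hc1_hom bigroupoid_hc2_cell bigroupoid_idc_hom bigroupoid_inv1_hom
  bigroupoid_inv2_cell bigroupoid_assoc_cell bigroupoid_lunit_cell bigroupoid_runit_cell
  bigroupoid_evc_cell bigroupoid_coevc_cell

text \<open>The laws are stated so that they work as rewrite rules: boundary 0-cells that the
  simplifier would rewrite are replaced by variables, identity 2-cells that it would cancel
  are omitted, and associativity is oriented to the right, where the left-hand sides of the
  pentagon and zigzag laws are already in normal form.\<close>

lemma
  shows bigroupoid_vc_assoc: "\<alpha> \<in> cell B f g \<Longrightarrow> \<beta> \<in> cell B g h \<Longrightarrow> \<gamma> \<in> cell B h k \<Longrightarrow>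
           vc B (vc B \<gamma> \<beta>) \<alpha> = vc B \<gamma> (vc B \<beta> \<alpha>)"
    and bigroupoid_vc_left_id: "\<alpha> \<in> cell B f g \<Longrightarrow> vc B (vi B g) \<alpha> = \<alpha>"
    and bigroupoid_vc_right_id: "\<alpha> \<in> cell B f g \<Longrightarrow> vc B \<alpha> (vi B f) = \<alpha>"
    and bigroupoid_hc2_vi: "f \<in> ar1 B \<Longrightarrow> g \<in> ar1 B \<Longrightarrow> t1 B f = s1 B g \<Longrightarrow>
           hc2 B (vi B g) (vi B f) = vi B (hc1 B g f)"
    and bigroupoid_interchange: "\<alpha> \<in> cell B f f' \<Longrightarrow> \<alpha>' \<in> cell B f' f'' \<Longrightarrow>
           \<beta> \<in> cell B g g' \<Longrightarrow> \<beta>' \<in> cell B g' g'' \<Longrightarrow> t1 B f = s1 B g \<Longrightarrow>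
           hc2 B (vc B \<beta>' \<beta>) (vc B \<alpha>' \<alpha>) = vc B (hc2 B \<beta>' \<alpha>') (hc2 B \<beta> \<alpha>)"
    and bigroupoid_inv2_vi: "f \<in> ar1 B \<Longrightarrow> inv2 B (vi B f) = vi B (inv1 B f)"
    and bigroupoid_inv2_vc: "\<alpha> \<in> cell B f g \<Longrightarrow> \<beta> \<in> cell B g h \<Longrightarrow>
           inv2 B (vc B \<beta> \<alpha>) = vc B (inv2 B \<beta>) (inv2 B \<alpha>)"
    and bigroupoid_assoc_natural: "\<alpha> \<in> cell B f f' \<Longrightarrow> \<beta> \<in> cell B g g' \<Longrightarrow> \<gamma> \<in> cell B h h' \<Longrightarrow>
           t1 B f = s1 B g \<Longrightarrow> t1 B g = s1 B h \<Longrightarrow>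
           vc B (assoc B h' g' f') (hc2 B (hc2 B \<gamma> \<beta>) \<alpha>) = vc B (hc2 B \<gamma> (hc2 B \<beta> \<alpha>)) (assoc B h g f)"
    and bigroupoid_lunit_natural: "\<alpha> \<in> cell B f g \<Longrightarrow>
           vc B \<alpha> (lunit B f) = vc B (lunit B g) (hc2 B (vi B (idc B (t1 B f))) \<alpha>)"
    and bigroupoid_runit_natural: "\<alpha> \<in> cell B f g \<Longrightarrow>
           vc B \<alpha> (runit B f) = vc B (runit B g) (hc2 B \<alpha> (vi B (idc B (s1 B f))))"
    and bigroupoid_pentagon: "f \<in> ar1 B \<Longrightarrow> g \<in> ar1 B \<Longrightarrow> h \<in> ar1 B \<Longrightarrow> k \<in> ar1 B \<Longrightarrow>
           t1 B f = s1 B g \<Longrightarrow> t1 B g = s1 B h \<Longrightarrow> t1 B h = s1 B k \<Longrightarrow>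
           vc B (assoc B k h (hc1 B g f)) (assoc B (hc1 B k h) g f)
             = vc B (hc2 B (vi B k) (assoc B h g f))
                 (vc B (assoc B k (hc1 B h g) f) (hc2 B (assoc B k h g) (vi B f)))"
    and bigroupoid_zigzag: "f \<in> ar1 B \<Longrightarrow>
           vc B (runit B f) (vc B (hc2 B (vi B f) (evc B f))
             (vc B (assoc B f (inv1 B f) f) (hc2 B (coevc B f) (vi B f)))) = lunit B f"
  using bg unfolding bigroupoid_def by auto

lemma bigroupoid_triangle:
  assumes "f \<in> ar1 B" "g \<in> ar1 B" "t1 B f = Y" "s1 B g = Y"
  shows "vc B (hc2 B (vi B g) (lunit B f)) (assoc B g (idc B Y) f) = hc2 B (runit B g) (vi B f)"
proof -
  have "\<forall>f\<in>ar1 B. \<forall>g\<in>ar1 B. t1 B f = s1 B g \<longrightarrow>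
      vc B (hc2 B (vi B g) (lunit B f)) (assoc B g (idc B (t1 B f)) f) = hc2 B (runit B g) (vi B f)"
    using bg unfolding bigroupoid_def by (elim conjE)
  from this[rule_format, of f g] assms show ?thesis by simp
qed

lemma bigroupoid_evc_natural:
  assumes "\<alpha> \<in> cell B f g"
  shows "vc B (evc B g) (hc2 B (inv2 B \<alpha>) \<alpha>) = evc B f"
proof -
  have "f \<in> ar1 B"
    using assms bigroupoid_s2_ar1 by auto
  then have "evc B f = vc B (vi B (idc B (s1 B f))) (evc B f)"
    by (rule bigroupoid_vc_left_id[OF bigroupoid_evc_cell, symmetric])
  also have "\<dots> = vc B (evc B g) (hc2 B (inv2 B \<alpha>) \<alpha>)"
    using bg assms unfolding bigroupoid_def by auto
  finally show ?thesis by (rule sym)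
qed

lemma bigroupoid_coevc_natural:
  assumes "\<alpha> \<in> cell B f g"
  shows "vc B (hc2 B \<alpha> (inv2 B \<alpha>)) (coevc B f) = coevc B g"
proof -
  have g: "g \<in> ar1 B" "t1 B g = t1 B f"
    using assms bigroupoid_t2_ar1 bigroupoid_t1_t2 by auto
  have "vc B (hc2 B \<alpha> (inv2 B \<alpha>)) (coevc B f) = vc B (coevc B g) (vi B (idc B (t1 B f)))"
    using bg assms unfolding bigroupoid_def by auto
  also have "\<dots> = coevc B g"
    using bigroupoid_vc_right_id[OF bigroupoid_coevc_cell] g by metis
  finally show ?thesis .
qed

lemmas bigroupoid_equations =
  bigroupoid_vc_assoc bigroupoid_vc_left_id bigroupoid_vc_right_id bigroupoid_hc2_vi
  bigroupoid_interchange bigroupoid_inv2_vi bigroupoid_inv2_vc bigroupoid_assoc_natural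
  bigroupoid_lunit_natural bigroupoid_runit_natural bigroupoid_pentagon bigroupoid_zigzag
  bigroupoid_triangle bigroupoid_evc_natural bigroupoid_coevc_natural

lemma bigroupoid_vinv:
  "\<alpha> \<in> cell B f g \<Longrightarrow> \<exists>\<beta>\<in>cell B g f. vc B \<beta> \<alpha> = vi B f \<and> vc B \<alpha> \<beta> = vi B g"
  using bg unfolding bigroupoid_def by auto

end

lemma Inl_in_Plus_iff [simp]: "Inl a \<in> A <+> B \<longleftrightarrow> a \<in> A"
  and Inr_in_Plus_iff [simp]: "Inr b \<in> A <+> B \<longleftrightarrow> b \<in> B"
  by auto

text \<open>Only generators \<open>CGen\<close> occur as 1-cells below.\<close>

fun gdom :: "('o,'g) cterm \<Rightarrow> 'o" where
  "gdom (CGen X m Y) = X"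
| "gdom _ = undefined"

fun gcod :: "('o,'g) cterm \<Rightarrow> 'o" where
  "gcod (CGen X m Y) = Y"
| "gcod _ = undefined"

definition proj0 :: "('ao,'am,'at,'co,'cm,'ct) bmor \<Rightarrow> 'ao + 'co \<Rightarrow> 'co" where
  "proj0 M = case_sum (F0 M) id"

fun proj1 :: "('ao,'am,'at,'co,'cm,'ct) bmor \<Rightarrow> ('o, 'am + 'cm) cterm \<Rightarrow> 'cm" where
  "proj1 M (CGen X (Inl f) Y) = F1 M f"
| "proj1 M (CGen X (Inr c) Y) = c"
| "proj1 M _ = undefined"

text \<open>A 2-cell is a triple \<open>(f, Inr \<gamma>, g)\<close> with \<open>\<gamma>\<close> a 2-cell of C.\<close>

definition proj2 :: "'x \<times> ('at + 'ct) \<times> 'y \<Rightarrow> 'ct" where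
  "proj2 \<alpha> = projr (fst (snd \<alpha>))"

lemma proj0_simps [simp]: "proj0 M (Inl X) = F0 M X" "proj0 M (Inr Z) = Z"
  by (simp_all add: proj0_def)

lemma proj2_simp [simp]: "proj2 (f, Inr \<gamma>, g) = \<gamma>"
  by (simp add: proj2_def)

definition incl1 :: "('ao,'am,'at) bigrpd \<Rightarrow> 'am \<Rightarrow> ('ao + 'co, 'am + 'cm) cterm" where
  "incl1 A f = CGen (Inl (s1 A f)) (Inl f) (Inl (t1 A f))"

lemma incl1_simps [simp]:
  "gdom (incl1 A f) = Inl (s1 A f)" "gcod (incl1 A f) = Inl (t1 A f)" "proj1 M (incl1 A f) = F1 M f"
  by (simp_all add: incl1_def)

definition fac_ar1 :: "('ao,'am,'at) bigrpd \<Rightarrow> ('co,'cm,'ct) bigrpd \<Rightarrow> ('ao,'am,'at,'co,'cm,'ct) bmor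
    \<Rightarrow> ('ao + 'co, 'am + 'cm) cterm set" where
  "fac_ar1 A C M = incl1 A ` ar1 A \<union>
     {CGen X (Inr c) Y | X c Y. X \<in> obj A <+> obj C \<and> Y \<in> obj A <+> obj C \<and>
        c \<in> hom C (proj0 M X) (proj0 M Y)}"

definition fac_ar2 :: "('ao,'am,'at) bigrpd \<Rightarrow> ('co,'cm,'ct) bigrpd \<Rightarrow> ('ao,'am,'at,'co,'cm,'ct) bmor
    \<Rightarrow> (('ao + 'co, 'am + 'cm) cterm \<times> ('at + 'ct) \<times> ('ao + 'co, 'am + 'cm) cterm) set" where
  "fac_ar2 A C M = {(f, Inr \<gamma>, g) | f \<gamma> g. f \<in> fac_ar1 A C M \<and> g \<in> fac_ar1 A C M \<and>
     gdom f = gdom g \<and> gcod f = gcod g \<and> \<gamma> \<in> cell C (proj1 M f) (proj1 M g)}"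

definition gcomp :: "('co,'cm,'ct) bigrpd \<Rightarrow> ('ao,'am,'at,'co,'cm,'ct) bmor
    \<Rightarrow> ('o, 'am + 'cm) cterm \<Rightarrow> ('o, 'am + 'cm) cterm \<Rightarrow> ('o, 'am + 'cm) cterm" where
  "gcomp C M g f = CGen (gdom f) (Inr (hc1 C (proj1 M g) (proj1 M f))) (gcod g)"

definition gid :: "('co,'cm,'ct) bigrpd \<Rightarrow> ('ao,'am,'at,'co,'cm,'ct) bmor
    \<Rightarrow> 'ao + 'co \<Rightarrow> ('ao + 'co, 'am + 'cm) cterm" where
  "gid C M X = CGen X (Inr (idc C (proj0 M X))) X"

definition ginv :: "('co,'cm,'ct) bigrpd \<Rightarrow> ('ao,'am,'at,'co,'cm,'ct) bmor
    \<Rightarrow> ('o, 'am + 'cm) cterm \<Rightarrow> ('o, 'am + 'cm) cterm" where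
  "ginv C M f = CGen (gcod f) (Inr (inv1 C (proj1 M f))) (gdom f)"

lemma generator_simps [simp]:
  "gdom (gcomp C M g f) = gdom f" "gcod (gcomp C M g f) = gcod g"
  "proj1 M (gcomp C M g f) = hc1 C (proj1 M g) (proj1 M f)"
  "gdom (gid C M X) = X" "gcod (gid C M X) = X" "proj1 M (gid C M X) = idc C (proj0 M X)"
  "gdom (ginv C M f) = gcod f" "gcod (ginv C M f) = gdom f" "proj1 M (ginv C M f) = inv1 C (proj1 M f)"
  by (simp_all add: gcomp_def gid_def ginv_def)

definition fac_bigrpd :: "('ao,'am,'at) bigrpd \<Rightarrow> ('co,'cm,'ct) bigrpd \<Rightarrow> ('ao,'am,'at,'co,'cm,'ct) bmor
    \<Rightarrow> ('ao,'am,'at,'co,'cm,'ct) mid_bigrpd" where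
  "fac_bigrpd A C M =
    \<lparr> obj = obj A <+> obj C, ar1 = fac_ar1 A C M, ar2 = fac_ar2 A C M,
      s1 = gdom, t1 = gcod, s2 = fst, t2 = (\<lambda>\<alpha>. snd (snd \<alpha>)),
      vc = (\<lambda>\<beta> \<alpha>. (fst \<alpha>, Inr (vc C (proj2 \<beta>) (proj2 \<alpha>)), snd (snd \<beta>))),
      vi = (\<lambda>f. (f, Inr (vi C (proj1 M f)), f)),
      hc1 = gcomp C M,
      hc2 = (\<lambda>\<beta> \<alpha>. (gcomp C M (fst \<beta>) (fst \<alpha>), Inr (hc2 C (proj2 \<beta>) (proj2 \<alpha>)),
                    gcomp C M (snd (snd \<beta>)) (snd (snd \<alpha>)))),
      idc = gid C M,
      inv1 = ginv C M,
      inv2 = (\<lambda>\<alpha>. (ginv C M (fst \<alpha>), Inr (inv2 C (proj2 \<alpha>)), ginv C M (snd (snd \<alpha>)))),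
      assoc = (\<lambda>h g f. (gcomp C M (gcomp C M h g) f, Inr (assoc C (proj1 M h) (proj1 M g) (proj1 M f)),
                        gcomp C M h (gcomp C M g f))),
      lunit = (\<lambda>f. (gcomp C M (gid C M (gcod f)) f, Inr (lunit C (proj1 M f)), f)),
      runit = (\<lambda>f. (gcomp C M f (gid C M (gdom f)), Inr (runit C (proj1 M f)), f)),
      evc = (\<lambda>f. (gcomp C M (ginv C M f) f, Inr (evc C (proj1 M f)), gid C M (gdom f))),
      coevc = (\<lambda>f. (gid C M (gcod f), Inr (coevc C (proj1 M f)), gcomp C M f (ginv C M f))) \<rparr>"

lemma fac_bigrpd_simps [simp]:
  "obj (fac_bigrpd A C M) = obj A <+> obj C"
  "ar1 (fac_bigrpd A C M) = fac_ar1 A C M" "ar2 (fac_bigrpd A C M) = fac_ar2 A C M"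
  "s1 (fac_bigrpd A C M) = gdom" "t1 (fac_bigrpd A C M) = gcod"
  "s2 (fac_bigrpd A C M) = fst" "t2 (fac_bigrpd A C M) = (\<lambda>\<alpha>. snd (snd \<alpha>))"
  "vc (fac_bigrpd A C M) \<beta> \<alpha> = (fst \<alpha>, Inr (vc C (proj2 \<beta>) (proj2 \<alpha>)), snd (snd \<beta>))"
  "vi (fac_bigrpd A C M) f = (f, Inr (vi C (proj1 M f)), f)"
  "hc1 (fac_bigrpd A C M) = gcomp C M"
  "hc2 (fac_bigrpd A C M) \<beta> \<alpha> = (gcomp C M (fst \<beta>) (fst \<alpha>), Inr (hc2 C (proj2 \<beta>) (proj2 \<alpha>)),
                    gcomp C M (snd (snd \<beta>)) (snd (snd \<alpha>)))"
  "idc (fac_bigrpd A C M) = gid C M"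
  "inv1 (fac_bigrpd A C M) = ginv C M"
  "inv2 (fac_bigrpd A C M) \<alpha> = (ginv C M (fst \<alpha>), Inr (inv2 C (proj2 \<alpha>)), ginv C M (snd (snd \<alpha>)))"
  "assoc (fac_bigrpd A C M) h g f = (gcomp C M (gcomp C M h g) f,
     Inr (assoc C (proj1 M h) (proj1 M g) (proj1 M f)), gcomp C M h (gcomp C M g f))"
  "lunit (fac_bigrpd A C M) f = (gcomp C M (gid C M (gcod f)) f, Inr (lunit C (proj1 M f)), f)"
  "runit (fac_bigrpd A C M) f = (gcomp C M f (gid C M (gdom f)), Inr (runit C (proj1 M f)), f)"
  "evc (fac_bigrpd A C M) f = (gcomp C M (ginv C M f) f, Inr (evc C (proj1 M f)), gid C M (gdom f))"
  "coevc (fac_bigrpd A C M) f = (gid C M (gcod f), Inr (coevc C (proj1 M f)), gcomp C M f (ginv C M f))"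
  by (simp_all add: fac_bigrpd_def)

lemma gen_in_fac_ar1 [simp]:
  "CGen X (Inr c) Y \<in> fac_ar1 A C M \<longleftrightarrow>
     X \<in> obj A <+> obj C \<and> Y \<in> obj A <+> obj C \<and> c \<in> hom C (proj0 M X) (proj0 M Y)"
  by (auto simp: fac_ar1_def incl1_def)

lemma incl1_in_fac_ar1 [simp]: "f \<in> ar1 A \<Longrightarrow> incl1 A f \<in> fac_ar1 A C M"
  by (simp add: fac_ar1_def)

lemma fac_ar2_tuple [simp]:
  "(f, Inr \<gamma>, g) \<in> fac_ar2 A C M \<longleftrightarrow> f \<in> fac_ar1 A C M \<and> g \<in> fac_ar1 A C M \<and>
     gdom f = gdom g \<and> gcod f = gcod g \<and> \<gamma> \<in> cell C (proj1 M f) (proj1 M g)"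
  by (simp add: fac_ar2_def)

lemma fac_ar2E:
  assumes "\<alpha> \<in> fac_ar2 A C M"
  obtains f \<gamma> g where "\<alpha> = (f, Inr \<gamma>, g)" "f \<in> fac_ar1 A C M" "g \<in> fac_ar1 A C M"
    "gdom f = gdom g" "gcod f = gcod g" "\<gamma> \<in> cell C (proj1 M f) (proj1 M g)"
  using assms unfolding fac_ar2_def by blast

definition fac_incl :: "('ao,'am,'at) bigrpd \<Rightarrow> ('co,'cm,'ct) bigrpd \<Rightarrow> ('ao,'am,'at,'co,'cm,'ct) bmor
    \<Rightarrow> ('ao,'am,'at,'ao + 'co, ('ao + 'co, 'am + 'cm) cterm,
         ('ao + 'co, 'am + 'cm) cterm \<times> ('at + 'ct) \<times> ('ao + 'co, 'am + 'cm) cterm) bmor" where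
  "fac_incl A C M =
    \<lparr> F0 = Inl, F1 = incl1 A,
      F2 = (\<lambda>\<alpha>. (incl1 A (s2 A \<alpha>), Inr (F2 M \<alpha>), incl1 A (t2 A \<alpha>))),
      phc = (\<lambda>g f. (gcomp C M (incl1 A g) (incl1 A f), Inr (phc M g f), incl1 A (hc1 A g f))),
      phu = (\<lambda>X. (gid C M (Inl X), Inr (phu M X), incl1 A (idc A X))),
      phi = (\<lambda>f. (ginv C M (incl1 A f), Inr (phi M f), incl1 A (inv1 A f))) \<rparr>"

definition fac_proj :: "('co,'cm,'ct) bigrpd \<Rightarrow> ('ao,'am,'at,'co,'cm,'ct) bmor
    \<Rightarrow> ('ao + 'co, ('ao + 'co, 'am + 'cm) cterm,
         ('ao + 'co, 'am + 'cm) cterm \<times> ('at + 'ct) \<times> ('ao + 'co, 'am + 'cm) cterm, 'co,'cm,'ct) bmor" where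
  "fac_proj C M =
    \<lparr> F0 = proj0 M, F1 = proj1 M, F2 = proj2,
      phc = (\<lambda>g f. vi C (hc1 C (proj1 M g) (proj1 M f))),
      phu = (\<lambda>X. vi C (idc C (proj0 M X))),
      phi = (\<lambda>f. vi C (inv1 C (proj1 M f))) \<rparr>"

lemma fac_incl_simps [simp]:
  "F0 (fac_incl A C M) = Inl" "F1 (fac_incl A C M) = incl1 A"
  "F2 (fac_incl A C M) \<alpha> = (incl1 A (s2 A \<alpha>), Inr (F2 M \<alpha>), incl1 A (t2 A \<alpha>))"
  "phc (fac_incl A C M) g f = (gcomp C M (incl1 A g) (incl1 A f), Inr (phc M g f), incl1 A (hc1 A g f))"
  "phu (fac_incl A C M) X = (gid C M (Inl X), Inr (phu M X), incl1 A (idc A X))"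
  "phi (fac_incl A C M) f = (ginv C M (incl1 A f), Inr (phi M f), incl1 A (inv1 A f))"
  by (simp_all add: fac_incl_def)

lemma fac_proj_simps [simp]:
  "F0 (fac_proj C M) = proj0 M" "F1 (fac_proj C M) = proj1 M" "F2 (fac_proj C M) = proj2"
  "phc (fac_proj C M) g f = vi C (hc1 C (proj1 M g) (proj1 M f))"
  "phu (fac_proj C M) X = vi C (idc C (proj0 M X))"
  "phi (fac_proj C M) f = vi C (inv1 C (proj1 M f))"
  by (simp_all add: fac_proj_def)

lemma cofibration_fac_incl: "cofibration A (fac_bigrpd A C M) (fac_incl A C M)"
  unfolding cofibration_def by (auto simp: inj_on_def incl1_def)

lemma strict_mor_fac_proj: "strict_mor (fac_bigrpd A C M) C (fac_proj C M)"
  unfolding strict_mor_def by simp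

context
  fixes A :: "('ao,'am,'at) bigrpd" and C :: "('co,'cm,'ct) bigrpd"
    and M :: "('ao,'am,'at,'co,'cm,'ct) bmor"
  assumes bA: "bigroupoid A" and bC: "bigroupoid C" and mM: "morphism A C M"
begin

lemmas C_laws = bigroupoid_typing[OF bC, simplified] bigroupoid_equations[OF bC]

lemma proj0_obj [simp]: "X \<in> obj A <+> obj C \<Longrightarrow> proj0 M X \<in> obj C"
  using mM unfolding morphism_def by auto

lemma fac_ar1_typing [simp]:
  assumes "f \<in> fac_ar1 A C M"
  shows "gdom f \<in> obj A <+> obj C" "gcod f \<in> obj A <+> obj C" "proj1 M f \<in> ar1 C"
    "s1 C (proj1 M f) = proj0 M (gdom f)" "t1 C (proj1 M f) = proj0 M (gcod f)"
  using assms bigroupoid_s1_obj[OF bA] bigroupoid_t1_obj[OF bA] mM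
  unfolding fac_ar1_def morphism_def by auto

lemma fac_ar1_closed [simp]:
  "f \<in> fac_ar1 A C M \<Longrightarrow> g \<in> fac_ar1 A C M \<Longrightarrow> gcod f = gdom g \<Longrightarrow> gcomp C M g f \<in> fac_ar1 A C M"
  "X \<in> obj A <+> obj C \<Longrightarrow> gid C M X \<in> fac_ar1 A C M"
  "f \<in> fac_ar1 A C M \<Longrightarrow> ginv C M f \<in> fac_ar1 A C M"
  by (simp_all add: gcomp_def gid_def ginv_def C_laws)

lemma bigroupoid_fac_bigrpd: "bigroupoid (fac_bigrpd A C M)"
proof -
  let ?B = "fac_bigrpd A C M"
  have inverses: "\<forall>\<alpha>\<in>ar2 ?B. \<exists>\<beta>\<in>cell ?B (t2 ?B \<alpha>) (s2 ?B \<alpha>).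
      vc ?B \<beta> \<alpha> = vi ?B (s2 ?B \<alpha>) \<and> vc ?B \<alpha> \<beta> = vi ?B (t2 ?B \<alpha>)"
  proof
    fix \<alpha> assume "\<alpha> \<in> ar2 ?B"
    then obtain f \<gamma> g where \<alpha>: "\<alpha> = (f, Inr \<gamma>, g)" "f \<in> fac_ar1 A C M" "g \<in> fac_ar1 A C M"
      "gdom f = gdom g" "gcod f = gcod g" "\<gamma> \<in> cell C (proj1 M f) (proj1 M g)"
      by (auto elim: fac_ar2E)
    then obtain \<delta> where "\<delta> \<in> cell C (proj1 M g) (proj1 M f)"
        "vc C \<delta> \<gamma> = vi C (proj1 M f)" "vc C \<gamma> \<delta> = vi C (proj1 M g)"
      using bigroupoid_vinv[OF bC] by blast
    with \<alpha> show "\<exists>\<beta>\<in>cell ?B (t2 ?B \<alpha>) (s2 ?B \<alpha>).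
        vc ?B \<beta> \<alpha> = vi ?B (s2 ?B \<alpha>) \<and> vc ?B \<alpha> \<beta> = vi ?B (t2 ?B \<alpha>)"
      by (intro bexI[of _ "(g, Inr \<delta>, f)"]) auto
  qed
  show ?thesis
    unfolding bigroupoid_def
    by (intro conjI inverses; unfold fac_bigrpd_simps; (intro ballI impI)?; (elim fac_ar2E)?;
        simp add: C_laws)
qed

lemma morphism_fac_incl: "morphism A (fac_bigrpd A C M) (fac_incl A C M)"
  using mM bigroupoid_typing[OF bA, simplified] unfolding morphism_def
  by (auto simp: C_laws)

lemma morphism_fac_proj: "morphism (fac_bigrpd A C M) C (fac_proj C M)"
  unfolding morphism_def
  by (intro conjI; unfold fac_bigrpd_simps fac_proj_simps; (intro ballI impI)?; (elim fac_ar2E)?;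
      simp add: C_laws)

lemma fibration_fac_proj: "fibration (fac_bigrpd A C M) C (fac_proj C M)"
  unfolding fibration_def
proof (intro conjI ballI impI)
  fix Y b assume "Y \<in> obj (fac_bigrpd A C M)" "b \<in> ar1 C" "t1 C b = F0 (fac_proj C M) Y"
  then have "CGen (Inr (s1 C b)) (Inr b) Y \<in> fac_ar1 A C M"
    by (simp add: bigroupoid_s1_obj[OF bC])
  then show "\<exists>a\<in>ar1 (fac_bigrpd A C M). t1 (fac_bigrpd A C M) a = Y \<and>
      F0 (fac_proj C M) (s1 (fac_bigrpd A C M) a) = s1 C b \<and> F1 (fac_proj C M) a = b"
    by (intro bexI[of _ "CGen (Inr (s1 C b)) (Inr b) Y"]) auto
next
  fix a \<beta> assume a: "a \<in> ar1 (fac_bigrpd A C M)" "\<beta> \<in> ar2 C" "t2 C \<beta> = F1 (fac_proj C M) a"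
  let ?f = "CGen (gdom a) (Inr (s2 C \<beta>)) (gcod a)"
  have "s1 C (s2 C \<beta>) = proj0 M (gdom a)" "t1 C (s2 C \<beta>) = proj0 M (gcod a)"
    using a bigroupoid_s1_t2[OF bC, of \<beta>] bigroupoid_t1_t2[OF bC, of \<beta>] by simp_all
  then have "(?f, Inr \<beta>, a) \<in> fac_ar2 A C M"
    using a by (simp add: C_laws)
  then show "\<exists>\<alpha>\<in>ar2 (fac_bigrpd A C M). t2 (fac_bigrpd A C M) \<alpha> = a \<and>
      F1 (fac_proj C M) (s2 (fac_bigrpd A C M) \<alpha>) = s2 C \<beta> \<and> F2 (fac_proj C M) \<alpha> = \<beta>"
    by (intro bexI[of _ "(?f, Inr \<beta>, a)"]) auto
qed

text \<open>The pseudo-inverse sends a 1-cell of C to the fresh generator over it; the unit at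
  \<open>f\<close> is the identity 2-cell of \<open>H f\<close>, read as a 2-cell from \<open>f\<close> to that generator.\<close>

lemma hom_equivalence_fac_proj:
  assumes "X \<in> obj A <+> obj C" "Y \<in> obj A <+> obj C"
  shows "hom_equivalence (fac_bigrpd A C M) C (fac_proj C M) X Y"
  unfolding hom_equivalence_def using assms
  by (intro exI[of _ "\<lambda>h. CGen X (Inr h) Y"]
      exI[of _ "\<lambda>\<beta>. (CGen X (Inr (s2 C \<beta>)) Y, Inr \<beta>, CGen X (Inr (t2 C \<beta>)) Y)"]
      exI[of _ "\<lambda>f. (f, Inr (vi C (proj1 M f)), CGen X (Inr (proj1 M f)) Y)"]
      exI[of _ "\<lambda>h. vi C h"])
    (auto elim!: fac_ar2E simp: C_laws)

lemma weak_equivalence_fac_proj: "weak_equivalence (fac_bigrpd A C M) C (fac_proj C M)"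
  unfolding weak_equivalence_def
proof (intro conjI ballI)
  fix Z assume "Z \<in> obj C"
  then have "idc C Z \<in> hom C Z (F0 (fac_proj C M) (Inr Z))"
    by (simp add: C_laws)
  with \<open>Z \<in> obj C\<close> show "\<exists>Y\<in>obj (fac_bigrpd A C M). hom C Z (F0 (fac_proj C M) Y) \<noteq> {}"
    by (intro bexI[of _ "Inr Z"]) auto
qed (simp add: hom_equivalence_fac_proj)

lemma fac_proj_comp_incl: "mor_eq A M (mcomp C (fac_proj C M) (fac_incl A C M))"
  using mM bigroupoid_typing[OF bA, simplified]
  unfolding mor_eq_def mcomp_def morphism_def
  by (auto simp: C_laws)

end

theorem lemma4p4:
  fixes A :: "('ao,'am,'at) bigrpd"
    and C :: "('co,'cm,'ct) bigrpd"
    and M :: "('ao,'am,'at,'co,'cm,'ct) bmor"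
  assumes "bigroupoid A" and "bigroupoid C" and "morphism A C M"
  shows "\<exists>(B :: ('ao,'am,'at,'co,'cm,'ct) mid_bigrpd) G H.
           bigroupoid B \<and> morphism A B G \<and> morphism B C H \<and>
           cofibration A B G \<and> strict_mor B C H \<and> trivial_fibration B C H \<and>
           mor_eq A M (mcomp C H G)"
proof -
  let ?B = "fac_bigrpd A C M" and ?G = "fac_incl A C M" and ?H = "fac_proj C M"
  have "bigroupoid ?B" "morphism A ?B ?G" "morphism ?B C ?H" "fibration ?B C ?H"
    "weak_equivalence ?B C ?H" "mor_eq A M (mcomp C ?H ?G)"
    using assms by (rule bigroupoid_fac_bigrpd morphism_fac_incl morphism_fac_proj
        fibration_fac_proj weak_equivalence_fac_proj fac_proj_comp_incl)+
  moreover have "cofibration A ?B ?G" "strict_mor ?B C ?H"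
    by (rule cofibration_fac_incl strict_mor_fac_proj)+
  ultimately show ?thesis
    unfolding trivial_fibration_def by blast
qed

end
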